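(* For all real numbers $a\le b$, the closed interval $[a,b]$ contains only finitely many cutoffs.
   Context: For a real number $\alpha\ge 1$, define the integer sequence $(P^\alpha_i)_{i\ge 0}$ by $P^\alpha_0=0$, $P^\alpha_1=1$, and for $k\ge 1$, $P^\alpha_{k+1}=P^\alpha_k+P^\alpha_j$, where $j\ge1$ is the unique index with $\alpha P^\alpha_{j-1}<P^\alpha_k\le \alpha P^\alpha_j$. A cutoff is a real number $\alpha\ge 1$ such that for every real $\beta$ with $1\le\beta<\alpha$, the sequences $(P^\alpha_i)$ and $(P^\beta_i)$ are not identical. *)

theory Defs
  imports Complex_Main
begin

fun Plist :: "real \<Rightarrow> nat \<Rightarrow> nat list" where
  "Plist \<alpha> 0 = [0, 1]"
| "Plist \<alpha> (Suc n) =
     (let xs = Plist \<alpha> n; pk = last xs;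
          j = (THE j. 1 \<le> j \<and> j < length xs \<and>
                  \<alpha> * real (xs ! (j - 1)) < real pk \<and> real pk \<le> \<alpha> * real (xs ! j))
      in xs @ [pk + xs ! j])"

definition P :: "real \<Rightarrow> nat \<Rightarrow> nat" where
  "P \<alpha> i = Plist \<alpha> i ! i"

definition cutoff :: "real \<Rightarrow> bool" where
  "cutoff \<alpha> \<longleftrightarrow> 1 \<le> \<alpha> \<and> (\<forall>\<beta>. 1 \<le> \<beta> \<and> \<beta> < \<alpha> \<longrightarrow> P \<alpha> \<noteq> P \<beta>)"

end

theory Submission
  imports Defs "HOL-Analysis.Elementary_Topology"
begin

(*
  A cutoff is a point where the sequence changes, so it suffices that P is locally constant on
  each side of every alpha >= 1: to the right P^beta = P^alpha, and to the left P^beta is the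
  sequence built by the strict variant of the rule (alpha P_{j-1} <= P_k < alpha P_j).  In both
  cases one shows that a sequence obeying the rule for alpha obeys it for every beta close to
  alpha.  The lag k - j_k is nondecreasing and at most alpha (alpha - 1), hence eventually equal
  to a constant m; from then on the quantities that must stay positive (such as
  P_k - beta P_{j_k - 1}) satisfy x_{k+1} = x_k + x_{k-m}, so positivity on one window of m + 1
  consecutive indices propagates, and only finitely many strict inequalities have to survive a
  small change of beta.  Hence cutoffs are isolated, and a compact interval contains finitely
  many of them.
*)

subsection \<open>Rule-following sequences\<close>

text \<open>\<open>strict = False\<close> is the comparison \<open>P\<^sub>k \<le> \<alpha> P\<^sub>j\<close> of the defining rule;
  \<open>strict = True\<close> gives the rule obeyed by \<open>P\<^sup>\<beta>\<close> as \<open>\<beta>\<close> increases to \<open>\<alpha>\<close>.\<close>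

definition covered :: "bool \<Rightarrow> real \<Rightarrow> nat \<Rightarrow> nat \<Rightarrow> bool" where
  "covered strict \<alpha> y x \<longleftrightarrow> (if strict then real y < \<alpha> * real x else real y \<le> \<alpha> * real x)"

lemma covered_imp_le: "covered strict \<alpha> y x \<Longrightarrow> real y \<le> \<alpha> * real x"
  by (auto simp: covered_def split: if_splits)

lemma covered_mono:
  assumes "0 \<le> \<alpha>" "covered strict \<alpha> y x" "y' \<le> y" "x \<le> x'"
  shows "covered strict \<alpha> y' x'"
proof -
  have "\<alpha> * real x \<le> \<alpha> * real x'"
    using assms by (simp add: mult_left_mono)
  then show ?thesis
    using assms by (auto simp: covered_def split: if_splits)
qed

lemma covered_add:
  "covered strict \<alpha> y x \<Longrightarrow> covered strict \<alpha> y' x' \<Longrightarrow> covered strict \<alpha> (y + y') (x + x')"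
  by (auto simp: covered_def distrib_left split: if_splits)

lemma covered_refl:
  assumes "1 \<le> \<alpha>" "strict \<Longrightarrow> 1 < \<alpha>" "1 \<le> y"
  shows "covered strict \<alpha> y y"
  using assms by (auto simp: covered_def)

lemma not_covered_zero: "1 \<le> y \<Longrightarrow> \<not> covered strict \<alpha> y 0"
  by (auto simp: covered_def)

definition selects :: "bool \<Rightarrow> real \<Rightarrow> (nat \<Rightarrow> nat) \<Rightarrow> nat \<Rightarrow> nat \<Rightarrow> bool" where
  "selects strict \<alpha> p k j \<longleftrightarrow>
     1 \<le> j \<and> j \<le> k \<and> \<not> covered strict \<alpha> (p k) (p (j - 1)) \<and> covered strict \<alpha> (p k) (p j)"

definition follows_rule :: "bool \<Rightarrow> real \<Rightarrow> (nat \<Rightarrow> nat) \<Rightarrow> bool" where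
  "follows_rule strict \<alpha> p \<longleftrightarrow>
     p 0 = 0 \<and> p 1 = 1 \<and> (\<forall>k\<ge>1. \<exists>j. selects strict \<alpha> p k j \<and> p (Suc k) = p k + p j)"

definition rule_index :: "bool \<Rightarrow> real \<Rightarrow> (nat \<Rightarrow> nat) \<Rightarrow> nat \<Rightarrow> nat" where
  "rule_index strict \<alpha> p k = (LEAST j. covered strict \<alpha> (p k) (p j))"

lemma selects_cong:
  "(\<And>i. i \<le> k \<Longrightarrow> p i = q i) \<Longrightarrow> selects strict \<alpha> p k j \<longleftrightarrow> selects strict \<alpha> q k j"
  by (auto simp: selects_def)

lemma rule_index_eqI:
  assumes "0 \<le> \<alpha>" "mono p" "selects strict \<alpha> p k j"
  shows "rule_index strict \<alpha> p k = j"
  unfolding rule_index_def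
proof (rule Least_equality)
  show "covered strict \<alpha> (p k) (p j)"
    using assms(3) by (simp add: selects_def)
next
  fix i
  assume i: "covered strict \<alpha> (p k) (p i)"
  show "j \<le> i"
  proof (rule ccontr)
    assume "\<not> j \<le> i"
    then have "p i \<le> p (j - 1)"
      using \<open>mono p\<close> by (simp add: monoD)
    then have "covered strict \<alpha> (p k) (p (j - 1))"
      using covered_mono[OF \<open>0 \<le> \<alpha>\<close> i] by blast
    with assms(3) show False
      by (simp add: selects_def)
  qed
qed

lemma selects_rule_index:
  assumes "1 \<le> \<alpha>" "strict \<Longrightarrow> 1 < \<alpha>" "p 0 = 0" "1 \<le> p k"
  shows "selects strict \<alpha> p k (rule_index strict \<alpha> p k)"
proof -
  let ?j = "rule_index strict \<alpha> p k"
  have "covered strict \<alpha> (p k) (p k)"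
    using covered_refl assms by blast
  then have covered_j: "covered strict \<alpha> (p k) (p ?j)" and "?j \<le> k"
    unfolding rule_index_def by (rule LeastI, rule Least_le)
  moreover have "1 \<le> ?j"
    using covered_j not_covered_zero[OF \<open>1 \<le> p k\<close>] \<open>p 0 = 0\<close> by (metis less_one not_less)
  moreover have "\<not> covered strict \<alpha> (p k) (p (?j - 1))"
    using not_less_Least[of "?j - 1" "\<lambda>j. covered strict \<alpha> (p k) (p j)"] \<open>1 \<le> ?j\<close>
    unfolding rule_index_def by simp
  ultimately show ?thesis
    by (simp add: selects_def)
qed

lemma follows_rule_mono:
  assumes "follows_rule strict \<alpha> p"
  shows "mono p"
  unfolding mono_iff_le_Suc
proof
  fix k
  show "p k \<le> p (Suc k)"
  proof (cases "k = 0")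
    case False
    then have "1 \<le> k" by simp
    then obtain j where "p (Suc k) = p k + p j"
      using assms unfolding follows_rule_def by blast
    then show ?thesis by simp
  qed (use assms in \<open>simp add: follows_rule_def\<close>)
qed

lemma follows_rule_pos: "follows_rule strict \<alpha> p \<Longrightarrow> 1 \<le> k \<Longrightarrow> 1 \<le> p k"
  using follows_rule_mono[THEN monoD, of strict \<alpha> p 1 k] by (simp add: follows_rule_def)

lemma follows_rule_step:
  assumes "follows_rule strict \<alpha> p" "0 \<le> \<alpha>" "1 \<le> k"
  shows "selects strict \<alpha> p k (rule_index strict \<alpha> p k)"
    and "p (Suc k) = p k + p (rule_index strict \<alpha> p k)"
proof -
  obtain j where "selects strict \<alpha> p k j" "p (Suc k) = p k + p j"
    using assms by (auto simp: follows_rule_def)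
  moreover have "rule_index strict \<alpha> p k = j"
    using rule_index_eqI[OF \<open>0 \<le> \<alpha>\<close> follows_rule_mono[OF assms(1)]] calculation(1) .
  ultimately show "selects strict \<alpha> p k (rule_index strict \<alpha> p k)"
    and "p (Suc k) = p k + p (rule_index strict \<alpha> p k)"
    by simp_all
qed

lemma follows_rule_unique:
  assumes "0 \<le> \<alpha>" "follows_rule strict \<alpha> p" "follows_rule strict \<alpha> q"
  shows "p = q"
proof
  fix n
  show "p n = q n"
  proof (induction n rule: less_induct)
    case (less n)
    show ?case
    proof (cases "n \<le> 1")
      case True
      then consider "n = 0" | "n = 1" by linarith
      then show ?thesis
        using assms by cases (simp_all add: follows_rule_def)
    next
      case False
      then obtain k where k: "n = Suc k" "1 \<le> k"
        by (cases n) auto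
      have agree: "p i = q i" if "i \<le> k" for i
        using less k that by simp
      let ?j = "rule_index strict \<alpha> p k"
      have sel: "selects strict \<alpha> p k ?j"
        using follows_rule_step(1)[OF assms(2,1) k(2)] .
      then have "selects strict \<alpha> q k ?j"
        using selects_cong[of k p q] agree by blast
      then have "rule_index strict \<alpha> q k = ?j"
        by (rule rule_index_eqI[OF assms(1) follows_rule_mono[OF assms(3)]])
      then have "q n = q k + q ?j"
        using follows_rule_step(2)[OF assms(3,1) k(2)] k(1) by simp
      also have "\<dots> = p k + p ?j"
        using agree sel by (simp add: selects_def)
      also have "\<dots> = p n"
        using follows_rule_step(2)[OF assms(2,1) k(2)] k(1) by simp
      finally show ?thesis by simp
    qed
  qed
qed

fun rule_list :: "bool \<Rightarrow> real \<Rightarrow> nat \<Rightarrow> nat list" where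
  "rule_list strict \<alpha> 0 = [0, 1]"
| "rule_list strict \<alpha> (Suc n) =
     (let xs = rule_list strict \<alpha> n; pk = last xs;
          j = (THE j. 1 \<le> j \<and> j < length xs \<and>
                  \<not> covered strict \<alpha> pk (xs ! (j - 1)) \<and> covered strict \<alpha> pk (xs ! j))
      in xs @ [pk + xs ! j])"

declare rule_list.simps(2) [simp del]

definition rule_seq :: "bool \<Rightarrow> real \<Rightarrow> nat \<Rightarrow> nat" where
  "rule_seq strict \<alpha> i = rule_list strict \<alpha> i ! i"

lemma Plist_eq_rule_list: "Plist \<alpha> n = rule_list False \<alpha> n"
  by (induction n) (simp_all add: covered_def Let_def not_le rule_list.simps(2))

lemma P_eq_rule_seq: "P \<alpha> = rule_seq False \<alpha>"
  by (simp add: fun_eq_iff P_def rule_seq_def Plist_eq_rule_list)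

lemma length_rule_list: "length (rule_list strict \<alpha> n) = n + 2"
  by (induction n) (simp_all add: Let_def rule_list.simps(2))

lemma nth_rule_list_Suc: "i < n + 2 \<Longrightarrow> rule_list strict \<alpha> (Suc n) ! i = rule_list strict \<alpha> n ! i"
  by (simp add: Let_def nth_append length_rule_list rule_list.simps(2))

lemma nth_rule_list_mono: "n \<le> m \<Longrightarrow> i < n + 2 \<Longrightarrow> rule_list strict \<alpha> m ! i = rule_list strict \<alpha> n ! i"
  by (induction m rule: dec_induct) (simp_all add: nth_rule_list_Suc)

lemma nth_rule_list: "i \<le> n + 1 \<Longrightarrow> rule_list strict \<alpha> n ! i = rule_seq strict \<alpha> i"
  unfolding rule_seq_def
  using nth_rule_list_mono[of "min i n" n i] nth_rule_list_mono[of "min i n" i i] by simp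

lemma rule_seq_Suc_Suc:
  "rule_seq strict \<alpha> (Suc (Suc n)) =
     rule_seq strict \<alpha> (Suc n) +
     rule_list strict \<alpha> n ! (THE j. selects strict \<alpha> (rule_seq strict \<alpha>) (Suc n) j)"
proof -
  let ?g = "rule_seq strict \<alpha>" and ?xs = "rule_list strict \<alpha> n"
  have "?xs \<noteq> []"
    using length_rule_list[of strict \<alpha> n] by auto
  then have last_xs: "last ?xs = ?g (Suc n)"
    using nth_rule_list[of "Suc n" n] by (simp add: last_conv_nth length_rule_list)
  have "(\<lambda>j. 1 \<le> j \<and> j < length ?xs \<and>
             \<not> covered strict \<alpha> (last ?xs) (?xs ! (j - 1)) \<and> covered strict \<alpha> (last ?xs) (?xs ! j))
        = selects strict \<alpha> ?g (Suc n)"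
  proof
    fix j
    show "(1 \<le> j \<and> j < length ?xs \<and>
          \<not> covered strict \<alpha> (last ?xs) (?xs ! (j - 1)) \<and> covered strict \<alpha> (last ?xs) (?xs ! j))
        = selects strict \<alpha> ?g (Suc n) j"
    proof (cases "j \<le> Suc n")
      case True
      then show ?thesis
        using nth_rule_list[of j n strict \<alpha>] nth_rule_list[of "j - 1" n strict \<alpha>]
        by (simp add: selects_def length_rule_list last_xs)
    qed (simp add: selects_def length_rule_list)
  qed
  then have "rule_list strict \<alpha> (Suc n) = ?xs @ [?g (Suc n) + ?xs ! (THE j. selects strict \<alpha> ?g (Suc n) j)]"
    by (simp only: rule_list.simps(2) Let_def last_xs)
  then show ?thesis
    using nth_rule_list[of "Suc (Suc n)" "Suc n" strict \<alpha>] by (simp add: nth_append length_rule_list)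
qed

lemma rule_seq_follows_rule:
  assumes "1 \<le> \<alpha>" "strict \<Longrightarrow> 1 < \<alpha>"
  shows "follows_rule strict \<alpha> (rule_seq strict \<alpha>)"
proof -
  let ?g = "rule_seq strict \<alpha>"
  have g0: "?g 0 = 0" and g1: "?g 1 = 1"
    using nth_rule_list[of 1 0 strict \<alpha>] by (simp_all add: rule_seq_def)
  have "?g k \<le> ?g (Suc k)" for k
  proof (cases k)
    case (Suc n)
    then show ?thesis
      using rule_seq_Suc_Suc[of strict \<alpha> n] by simp
  qed (simp add: g0 g1)
  then have "mono ?g"
    by (simp add: mono_iff_le_Suc)
  have "selects strict \<alpha> ?g k (rule_index strict \<alpha> ?g k)"
    and "?g (Suc k) = ?g k + ?g (rule_index strict \<alpha> ?g k)" if "1 \<le> k" for k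
  proof -
    let ?j = "rule_index strict \<alpha> ?g k"
    obtain n where n: "k = Suc n"
      using \<open>1 \<le> k\<close> by (cases k) auto
    have "1 \<le> ?g k"
      using monoD[OF \<open>mono ?g\<close> \<open>1 \<le> k\<close>] g1 by simp
    then show sel: "selects strict \<alpha> ?g k ?j"
      using selects_rule_index[of \<alpha> strict ?g k] assms g0 by blast
    have "(THE j. selects strict \<alpha> ?g k j) = ?j"
    proof (rule the_equality)
      fix j
      assume "selects strict \<alpha> ?g k j"
      then show "j = ?j"
        using rule_index_eqI[OF _ \<open>mono ?g\<close>] assms(1) by force
    qed (rule sel)
    then have "?g (Suc k) = ?g k + rule_list strict \<alpha> n ! ?j"
      using rule_seq_Suc_Suc[of strict \<alpha> n] n by simp
    also have "rule_list strict \<alpha> n ! ?j = ?g ?j"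
      using nth_rule_list[of ?j n] sel n by (simp add: selects_def)
    finally show "?g (Suc k) = ?g k + ?g ?j" .
  qed
  then show ?thesis
    using g0 g1 unfolding follows_rule_def by blast
qed

lemma P_follows_rule: "1 \<le> \<alpha> \<Longrightarrow> follows_rule False \<alpha> (P \<alpha>)"
  by (simp add: P_eq_rule_seq rule_seq_follows_rule)

lemma P_eqI:
  assumes "1 \<le> \<beta>" "follows_rule False \<beta> p"
  shows "P \<beta> = p"
  using follows_rule_unique[OF _ P_follows_rule assms(2)] assms(1) by simp

subsection \<open>The lag \<open>k - j\<^sub>k\<close>\<close>

lemma follows_rule_growth:
  assumes "follows_rule strict \<alpha> p" "0 \<le> \<alpha>" "1 \<le> j"
  shows "real (p j) * (\<alpha> + real t) \<le> \<alpha> * real (p (j + t))"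
proof (induction t)
  case 0
  show ?case by (simp add: mult.commute)
next
  case (Suc t)
  let ?i = "rule_index strict \<alpha> p (j + t)"
  have "1 \<le> j + t"
    using assms(3) by simp
  then have step: "p (Suc (j + t)) = p (j + t) + p ?i"
    and "covered strict \<alpha> (p (j + t)) (p ?i)"
    using follows_rule_step[OF assms(1,2)] by (simp_all add: selects_def)
  have covered: "real (p (j + t)) \<le> \<alpha> * real (p ?i)"
    using covered_imp_le \<open>covered strict \<alpha> (p (j + t)) (p ?i)\<close> .
  have "real (p j) \<le> real (p (j + t))"
    using follows_rule_mono[OF assms(1)] by (simp add: monoD)
  have "real (p j) * (\<alpha> + real (Suc t)) = real (p j) * (\<alpha> + real t) + real (p j)"
    by (simp add: distrib_left)
  also have "\<dots> \<le> \<alpha> * real (p (j + t)) + \<alpha> * real (p ?i)"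
    using Suc.IH \<open>real (p j) \<le> real (p (j + t))\<close> covered by linarith
  also have "\<dots> = \<alpha> * real (p (j + Suc t))"
    using step by (simp add: distrib_left)
  finally show ?case .
qed

lemma diff_rule_index_le:
  assumes "follows_rule strict \<alpha> p" "1 \<le> \<alpha>" "1 \<le> k"
  shows "real (k - rule_index strict \<alpha> p k) \<le> \<alpha> * (\<alpha> - 1)"
proof -
  let ?j = "rule_index strict \<alpha> p k"
  have sel: "selects strict \<alpha> p k ?j"
    using follows_rule_step(1)[OF assms(1) _ assms(3)] assms(2) by simp
  then have "1 \<le> ?j" "?j \<le> k"
    by (simp_all add: selects_def)
  have "real (p ?j) * (\<alpha> + real (k - ?j)) \<le> \<alpha> * real (p k)"
    using follows_rule_growth[OF assms(1) _ \<open>1 \<le> ?j\<close>, of "k - ?j"] \<open>?j \<le> k\<close> assms(2) by simp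
  also have "\<dots> \<le> real (p ?j) * (\<alpha> * \<alpha>)"
    using sel assms(2) mult_left_mono[OF covered_imp_le[of strict \<alpha> "p k" "p ?j"], of \<alpha>]
    by (simp add: selects_def mult_ac)
  finally have "real (p ?j) * (\<alpha> + real (k - ?j)) \<le> real (p ?j) * (\<alpha> * \<alpha>)" .
  moreover have "0 < real (p ?j)"
    using follows_rule_pos[OF assms(1) \<open>1 \<le> ?j\<close>] by simp
  ultimately have "\<alpha> + real (k - ?j) \<le> \<alpha> * \<alpha>"
    by (simp only: mult_le_cancel_left_pos)
  then show ?thesis
    by (simp add: right_diff_distrib)
qed

lemma rule_index_Suc_le:
  assumes "follows_rule strict \<alpha> p" "0 \<le> \<alpha>" "1 \<le> k"
  shows "rule_index strict \<alpha> p (Suc k) \<le> Suc (rule_index strict \<alpha> p k)"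
proof -
  let ?j = "rule_index strict \<alpha> p"
  have "covered strict \<alpha> (p k) (p (?j k))" "1 \<le> ?j k" "p (Suc k) = p k + p (?j k)"
    using follows_rule_step[OF assms] by (simp_all add: selects_def)
  moreover have "covered strict \<alpha> (p (?j k)) (p (?j (?j k)))"
    and "p (Suc (?j k)) = p (?j k) + p (?j (?j k))"
    using follows_rule_step[OF assms(1,2) \<open>1 \<le> ?j k\<close>] by (simp_all add: selects_def)
  ultimately have "covered strict \<alpha> (p (Suc k)) (p (Suc (?j k)))"
    using covered_add by metis
  then show ?thesis
    unfolding rule_index_def[of _ _ _ "Suc k"] by (rule Least_le)
qed

lemma nat_seq_eventually_const:
  fixes d :: "nat \<Rightarrow> nat"
  assumes "\<And>k. K\<^sub>0 \<le> k \<Longrightarrow> d k \<le> d (Suc k)" and "\<And>k. K\<^sub>0 \<le> k \<Longrightarrow> d k \<le> B"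
  shows "\<exists>K\<ge>K\<^sub>0. \<forall>k\<ge>K. d k = d K"
proof -
  let ?S = "d ` {K\<^sub>0..}"
  have "?S \<subseteq> {..B}"
    using assms(2) by auto
  then have "finite ?S"
    by (rule finite_subset) simp
  moreover have "?S \<noteq> {}"
    by simp
  ultimately have "Max ?S \<in> ?S"
    by (rule Max_in)
  then obtain K where K: "K\<^sub>0 \<le> K" "d K = Max ?S"
    by auto
  have "d k = d K" if "K \<le> k" for k
  proof (rule antisym)
    show "d k \<le> d K"
      using \<open>finite ?S\<close> K that by simp
    from that show "d K \<le> d k"
    proof (induction k rule: dec_induct)
      case (step k)
      then show ?case
        using assms(1)[of k] K(1) by simp
    qed simp
  qed
  with K(1) show ?thesis
    by blast
qed

lemma rule_index_eventually_shift:
  assumes "follows_rule strict \<alpha> p" "1 \<le> \<alpha>"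
  obtains K m where "1 \<le> K" and "\<And>k. K \<le> k \<Longrightarrow> rule_index strict \<alpha> p k + m = k"
proof -
  let ?j = "rule_index strict \<alpha> p"
  have j_le: "?j k \<le> k" if "1 \<le> k" for k
    using follows_rule_step(1)[OF assms(1) _ that] assms(2) by (simp add: selects_def)
  have "k - ?j k \<le> Suc k - ?j (Suc k)" if "1 \<le> k" for k
  proof -
    have "?j (Suc k) \<le> Suc (?j k)"
      using rule_index_Suc_le[OF assms(1) _ that] assms(2) by simp
    then show ?thesis
      by arith
  qed
  moreover have "k - ?j k \<le> nat \<lceil>\<alpha> * (\<alpha> - 1)\<rceil>" if "1 \<le> k" for k
  proof -
    have "real (k - ?j k) \<le> real (nat \<lceil>\<alpha> * (\<alpha> - 1)\<rceil>)"
      using diff_rule_index_le[OF assms that] real_nat_ceiling_ge[of "\<alpha> * (\<alpha> - 1)"] by linarith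
    then show ?thesis
      by (simp only: of_nat_le_iff)
  qed
  ultimately have "\<exists>K\<ge>1. \<forall>k\<ge>K. k - ?j k = K - ?j K"
    by (rule nat_seq_eventually_const)
  then obtain K where K: "1 \<le> K" "\<forall>k\<ge>K. k - ?j k = K - ?j K"
    by blast
  show ?thesis
  proof (rule that)
    show "1 \<le> K"
      by (fact K(1))
  next
    fix k
    assume "K \<le> k"
    then have "k - ?j k = K - ?j K" "?j k \<le> k"
      using K(1) K(2)[rule_format, of k] j_le[of k] by simp_all
    then show "?j k + (K - ?j K) = k"
      by linarith
  qed
qed

subsection \<open>Perturbing \<open>\<alpha>\<close>\<close>

lemma follows_rule_transfer:
  assumes "follows_rule strict \<alpha> p" "0 \<le> \<alpha>"
    and "\<And>k. 1 \<le> k \<Longrightarrow> selects strict' \<beta> p k (rule_index strict \<alpha> p k)"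
  shows "follows_rule strict' \<beta> p"
  unfolding follows_rule_def
proof (intro conjI allI impI)
  show "p 0 = 0" "p 1 = 1"
    using assms(1) by (simp_all add: follows_rule_def)
next
  fix k :: nat
  assume "1 \<le> k"
  then show "\<exists>j. selects strict' \<beta> p k j \<and> p (Suc k) = p k + p j"
    using assms(3) follows_rule_step(2)[OF assms(1,2)] by blast
qed

lemma lagged_recurrence:
  fixes p j :: "nat \<Rightarrow> nat"
  assumes lag: "\<And>k. K \<le> k \<Longrightarrow> j k + m = k"
    and rec: "\<And>k. K \<le> k \<Longrightarrow> p (Suc k) = p k + p (j k)"
    and "K + m + c \<le> k"
  shows "p (j (Suc k) - c) = p (j k - c) + p (j (k - m) - c)"
proof -
  have j_eq: "j x = x - m" if "K \<le> x" for x
    using lag[OF that] by simp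
  have "j (Suc k) - c = Suc (k - m - c)" "j k - c = k - m - c" "j (k - m) - c = j (k - m - c)"
    using j_eq[of "Suc k"] j_eq[of k] j_eq[of "k - m"] j_eq[of "k - m - c"] assms(3) by simp_all
  moreover have "p (Suc (k - m - c)) = p (k - m - c) + p (j (k - m - c))"
    using rec assms(3) by simp
  ultimately show ?thesis
    by (simp only:)
qed

lemma eventually_pos_linear_recurrence:
  fixes f :: "'a \<Rightarrow> nat \<Rightarrow> real"
  assumes rec: "\<And>x k. N + m \<le> k \<Longrightarrow> f x (Suc k) = f x k + f x (k - m)"
    and lim: "\<And>k. ((\<lambda>x. f x k) \<longlongrightarrow> f x\<^sub>0 k) F"
    and pos: "\<And>k. 1 \<le> k \<Longrightarrow> 0 < f x\<^sub>0 k"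
    and "1 \<le> N"
  shows "eventually (\<lambda>x. \<forall>k\<ge>1. 0 < f x k) F"
proof -
  have "eventually (\<lambda>x. \<forall>k\<in>{1..N + m}. 0 < f x k) F"
    using pos by (intro eventually_ball_finite ballI order_tendstoD(1)[OF lim]) auto
  then show ?thesis
  proof eventually_elim
    case (elim x)
    show "\<forall>k\<ge>1. 0 < f x k"
    proof (intro allI impI)
      fix k :: nat
      assume "1 \<le> k"
      then show "0 < f x k"
      proof (induction k rule: less_induct)
        case (less k)
        show ?case
        proof (cases "k \<le> N + m")
          case True
          with elim less.prems show ?thesis by simp
        next
          case False
          then obtain k' where k': "k = Suc k'" "N + m \<le> k'"
            by (cases k) auto
          then have "f x k = f x k' + f x (k' - m)"
            by (simp add: rec)
          moreover have "0 < f x k'" "0 < f x (k' - m)"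
            using less.IH k' \<open>1 \<le> N\<close> by simp_all
          ultimately show ?thesis
            by simp
        qed
      qed
    qed
  qed
qed

lemma eventually_pos_rule_index_combination:
  fixes u v :: "real \<Rightarrow> real"
  assumes rule: "follows_rule strict \<alpha> p" and "1 \<le> \<alpha>"
    and "(u \<longlongrightarrow> u \<alpha>) F" "(v \<longlongrightarrow> v \<alpha>) F"
    and "\<And>k. 1 \<le> k \<Longrightarrow> 0 < u \<alpha> * real (p k) + v \<alpha> * real (p (rule_index strict \<alpha> p k - c))"
  shows "eventually (\<lambda>\<beta>. \<forall>k\<ge>1. 0 < u \<beta> * real (p k) + v \<beta> * real (p (rule_index strict \<alpha> p k - c))) F"
proof -
  let ?j = "rule_index strict \<alpha> p"
  obtain K m where "1 \<le> K" and lag: "\<And>k. K \<le> k \<Longrightarrow> ?j k + m = k"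
    using rule_index_eventually_shift[OF rule \<open>1 \<le> \<alpha>\<close>] by blast
  have rec: "p (Suc k) = p k + p (?j k)" if "K \<le> k" for k
    using follows_rule_step(2)[OF rule] \<open>1 \<le> \<alpha>\<close> \<open>1 \<le> K\<close> that by simp
  show ?thesis
  proof (rule eventually_pos_linear_recurrence[where N = "K + c" and m = m and x\<^sub>0 = \<alpha>
        and f = "\<lambda>\<beta> k. u \<beta> * real (p k) + v \<beta> * real (p (?j k - c))"])
    fix \<beta> :: real and k :: nat
    assume k: "K + c + m \<le> k"
    then have "p (?j (Suc k) - c) = p (?j k - c) + p (?j (k - m) - c)"
      using lagged_recurrence[where p = p and j = ?j and K = K and m = m and c = c, OF lag rec]
      by simp
    moreover have "?j k = k - m"
      using lag[of k] k by simp
    then have "p (Suc k) = p k + p (k - m)"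
      using rec[of k] k by simp
    ultimately show "u \<beta> * real (p (Suc k)) + v \<beta> * real (p (?j (Suc k) - c)) =
        u \<beta> * real (p k) + v \<beta> * real (p (?j k - c)) +
        (u \<beta> * real (p (k - m)) + v \<beta> * real (p (?j (k - m) - c)))"
      by (simp add: algebra_simps)
  next
    fix k
    show "((\<lambda>\<beta>. u \<beta> * real (p k) + v \<beta> * real (p (?j k - c))) \<longlongrightarrow>
        u \<alpha> * real (p k) + v \<alpha> * real (p (?j k - c))) F"
      by (intro tendsto_intros assms)
  qed (use assms \<open>1 \<le> K\<close> in auto)
qed

lemma eventually_P_eq_at_right:
  assumes "1 \<le> \<alpha>"
  shows "eventually (\<lambda>\<beta>. P \<beta> = P \<alpha>) (at_right \<alpha>)"
proof -
  let ?p = "P \<alpha>" and ?j = "rule_index False \<alpha> (P \<alpha>)"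
  have rule: "follows_rule False \<alpha> ?p"
    using P_follows_rule[OF assms] .
  have sel: "selects False \<alpha> ?p k (?j k)" if "1 \<le> k" for k
    using follows_rule_step(1)[OF rule _ that] assms by simp
  have "0 < 1 * real (?p k) + - \<alpha> * real (?p (?j k - 1))" if "1 \<le> k" for k
    using sel[OF that] by (simp add: selects_def covered_def)
  then have "eventually (\<lambda>\<beta>. \<forall>k\<ge>1. 0 < 1 * real (?p k) + - \<beta> * real (?p (?j k - 1))) (at_right \<alpha>)"
    by (intro eventually_pos_rule_index_combination[OF rule assms] tendsto_intros)
  moreover have "eventually (\<lambda>\<beta>. \<alpha> < \<beta>) (at_right \<alpha>)"
    by (rule eventually_at_right_less)
  ultimately show ?thesis
  proof eventually_elim
    case (elim \<beta>)
    have "follows_rule False \<beta> ?p"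
    proof (rule follows_rule_transfer[OF rule])
      fix k :: nat
      assume "1 \<le> k"
      have "real (?p k) \<le> \<alpha> * real (?p (?j k))"
        using sel[OF \<open>1 \<le> k\<close>] by (simp add: selects_def covered_def)
      also have "\<dots> \<le> \<beta> * real (?p (?j k))"
        using elim by (simp add: mult_right_mono)
      moreover have "\<beta> * real (?p (?j k - 1)) < real (?p k)"
        using elim(1) \<open>1 \<le> k\<close> by simp
      ultimately show "selects False \<beta> ?p k (?j k)"
        using sel[OF \<open>1 \<le> k\<close>] by (auto simp: selects_def covered_def)
    qed (use assms in simp)
    then show "P \<beta> = P \<alpha>"
      using P_eqI elim assms by simp
  qed
qed

lemma eventually_P_eq_at_left:
  assumes "1 < \<alpha>"
  shows "eventually (\<lambda>\<beta>. P \<beta> = rule_seq True \<alpha>) (at_left \<alpha>)"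
proof -
  let ?p = "rule_seq True \<alpha>" and ?j = "rule_index True \<alpha> (rule_seq True \<alpha>)"
  have rule: "follows_rule True \<alpha> ?p"
    using rule_seq_follows_rule assms by simp
  have sel: "selects True \<alpha> ?p k (?j k)" if "1 \<le> k" for k
    using follows_rule_step(1)[OF rule _ that] assms by simp
  have "0 < - 1 * real (?p k) + \<alpha> * real (?p (?j k - 0))" if "1 \<le> k" for k
    using sel[OF that] by (simp add: selects_def covered_def)
  then have "eventually (\<lambda>\<beta>. \<forall>k\<ge>1. 0 < - 1 * real (?p k) + \<beta> * real (?p (?j k - 0))) (at_left \<alpha>)"
    using assms by (intro eventually_pos_rule_index_combination[OF rule] tendsto_intros) auto
  moreover have "eventually (\<lambda>\<beta>. 1 < \<beta> \<and> \<beta> < \<alpha>) (at_left \<alpha>)"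
    by (rule eventually_at_leftI[OF _ assms]) simp
  ultimately show ?thesis
  proof eventually_elim
    case (elim \<beta>)
    have "follows_rule False \<beta> ?p"
    proof (rule follows_rule_transfer[OF rule])
      fix k :: nat
      assume "1 \<le> k"
      have "\<alpha> * real (?p (?j k - 1)) \<le> real (?p k)"
        using sel[OF \<open>1 \<le> k\<close>] by (simp add: selects_def covered_def)
      moreover have "0 < ?p k"
        using follows_rule_pos[OF rule \<open>1 \<le> k\<close>] by simp
      ultimately have "\<beta> * real (?p (?j k - 1)) < real (?p k)"
      proof (cases "?p (?j k - 1) = 0")
        case False
        then have "\<beta> * real (?p (?j k - 1)) < \<alpha> * real (?p (?j k - 1))"
          using elim by (simp add: mult_strict_right_mono)
        with \<open>\<alpha> * real (?p (?j k - 1)) \<le> real (?p k)\<close> show ?thesis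
          by linarith
      qed simp
      moreover have "real (?p k) < \<beta> * real (?p (?j k))"
        using elim(1) \<open>1 \<le> k\<close> by simp
      ultimately show "selects False \<beta> ?p k (?j k)"
        using sel[OF \<open>1 \<le> k\<close>] by (auto simp: selects_def covered_def)
    qed (use assms in simp)
    then show "P \<beta> = ?p"
      using P_eqI elim by simp
  qed
qed

subsection \<open>Cutoffs are isolated\<close>

lemma eventually_not_cutoff_at_right: "eventually (\<lambda>y. \<not> cutoff y) (at_right x)"
proof (cases "1 \<le> x")
  case True
  have "eventually (\<lambda>y. P y = P x \<and> x < y) (at_right x)"
    using eventually_P_eq_at_right[OF True] eventually_at_right_less by (rule eventually_conj)
  then show ?thesis
    by eventually_elim (use True in \<open>auto simp: cutoff_def\<close>)
next
  case False
  then have "eventually (\<lambda>y. y < 1) (at_right x)"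
    by (intro eventually_at_rightI[of x 1]) auto
  then show ?thesis
    by eventually_elim (auto simp: cutoff_def)
qed

lemma eventually_not_cutoff_at_left: "eventually (\<lambda>y. \<not> cutoff y) (at_left x)"
proof (cases "1 < x")
  case True
  obtain b where "b < x" and b: "\<And>y. b < y \<Longrightarrow> y < x \<Longrightarrow> P y = rule_seq True x"
    using eventually_P_eq_at_left[OF True] unfolding eventually_at_left_field by blast
  show ?thesis
  proof (rule eventually_at_leftI[of "max b 1"])
    fix y
    assume y: "y \<in> {max b 1<..<x}"
    define \<beta> where "\<beta> = (max b 1 + y) / 2"
    have "1 \<le> \<beta>" "\<beta> < y" "P \<beta> = P y"
      using y b[of \<beta>] b[of y] unfolding \<beta>_def by auto
    then show "\<not> cutoff y"
      by (auto simp: cutoff_def)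
  qed (use True \<open>b < x\<close> in simp)
next
  case False
  show ?thesis
    by (rule eventually_at_leftI[of "x - 1"]) (use False in \<open>auto simp: cutoff_def\<close>)
qed

lemma eventually_not_cutoff: "eventually (\<lambda>y. \<not> cutoff y) (at x)"
  using eventually_not_cutoff_at_left eventually_not_cutoff_at_right
  by (simp add: eventually_at_split)

theorem mainTheorem9:
  fixes a b :: real
  assumes "a \<le> b"
  shows "finite {\<alpha> \<in> {a..b}. cutoff \<alpha>}"
proof -
  have "finite ({a..b} \<inter> Collect cutoff)"
    by (rule finite_not_islimpt_in_compact) (simp_all add: islimpt_iff_eventually eventually_not_cutoff)
  moreover have "{\<alpha> \<in> {a..b}. cutoff \<alpha>} = {a..b} \<inter> Collect cutoff"
    by auto
  ultimately show ?thesis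
    by simp
qed

end
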